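(* Let $\lambda\in(0,1)$ and $T\ge1$. Then $$\|V_\lambda-V_{\lambda,T}\|_{\sup}=\|\tilde V^1_\lambda-\tilde V^1_{\lambda,T}\|_{\sup}=\|\tilde V^2_\lambda-\tilde V^2_{\lambda,T}\|_{\sup}.$$
   Context: Setting: nonempty finite type sets $K,L$, action sets $A,B$, payoff $M:K\times L\times A\times B\to\mathbb R$. Discounted game $\Gamma_\lambda(p,q)$ ($p\in\Delta(K)$, $q\in\Delta(L)$): $k\sim p$, $l\sim q$ drawn independently and told privately to players 1, 2; infinitely many stages of simultaneous, publicly announced actions; strategies depend on own type and both histories; payoff to player 1 (maximizer) $\mathbb E[\sum_{t\ge1}\lambda(1-\lambda)^{t-1}M(k,l,a_t,b_t)]$, value $V_\lambda(p,q)$. $\Gamma_{\lambda,T}(p,q)$: same with the sum over $t\le T$, value $V_{\lambda,T}(p,q)$. Dual games $\tilde\Gamma^1_\lambda(\mu,q)$ ($\mu\in\mathbb R^{|K|}$): player 1 chooses his type $k$ himself, $l\sim q$ by nature, payoff $\mathbb E[\mu^k+\sum_{t\ge1}\lambda(1-\lambda)^{t-1}M]$, value $\tilde V^1_\lambda(\mu,q)$; $\tilde\Gamma^2_\lambda(p,\nu)$ ($\nu\in\mathbb R^{|L|}$): $k\sim p$ by nature, player 2 chooses $l$ himself, payoff $\mathbb E[\nu^l+\sum_{t\ge1}\lambda(1-\lambda)^{t-1}M]$, value $\tilde V^2_\lambda(p,\nu)$. $\tilde V^1_{\lambda,T},\tilde V^2_{\lambda,T}$ are the values of the same dual games with sums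 truncated at $T$. $\|f\|_{\sup}$ is the supremum of $|f|$ over its domain ($\Delta(K)\times\Delta(L)$, $\mathbb R^{|K|}\times\Delta(L)$, $\Delta(K)\times\mathbb R^{|L|}$ respectively). *)

theory Defs
  imports "HOL-Probability.Probability"
begin

text \<open>Types: 'k (player 1's types K), 'l (player 2's types L), 'a, 'b (action sets). Strategies are behaviour strategies:
  player 1 uses his own type and the public history, player 2 likewise.\<close>

type_synonym ('k,'a,'b) strat1 = "'k \<Rightarrow> ('a \<times> 'b) list \<Rightarrow> 'a pmf"
type_synonym ('l,'a,'b) strat2 = "'l \<Rightarrow> ('a \<times> 'b) list \<Rightarrow> 'b pmf"

fun hist_dist :: "('k,'a,'b) strat1 \<Rightarrow> ('l,'a,'b) strat2 \<Rightarrow> 'k \<Rightarrow> 'l \<Rightarrow> nat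
    \<Rightarrow> ('a \<times> 'b) list pmf" where
  "hist_dist \<sigma> \<tau> k l 0 = return_pmf []"
| "hist_dist \<sigma> \<tau> k l (Suc n) =
     bind_pmf (hist_dist \<sigma> \<tau> k l n) (\<lambda>h.
     bind_pmf (\<sigma> k h) (\<lambda>a.
     bind_pmf (\<tau> l h) (\<lambda>b. return_pmf (h @ [(a, b)]))))"

text \<open>Expected payoff of stage n+1 (stages are indexed from 0 here), with
  k \<sim> p, l \<sim> q independent.\<close>
definition stage_pay ::
  "('k \<Rightarrow> 'l \<Rightarrow> 'a \<Rightarrow> 'b \<Rightarrow> real) \<Rightarrow> 'k pmf \<Rightarrow> 'l pmf
   \<Rightarrow> ('k,'a,'b) strat1 \<Rightarrow> ('l,'a,'b) strat2 \<Rightarrow> nat \<Rightarrow> real" where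
  "stage_pay M p q \<sigma> \<tau> n =
     measure_pmf.expectation (pair_pmf p q) (\<lambda>(k, l).
       measure_pmf.expectation (hist_dist \<sigma> \<tau> k l n) (\<lambda>h.
         measure_pmf.expectation (\<sigma> k h) (\<lambda>a.
           measure_pmf.expectation (\<tau> l h) (\<lambda>b. M k l a b))))"

text \<open>Discounted payoff E[sum_{t>=1} lam (1-lam)^(t-1) M]; since M is bounded this
  equals the series of the expected stage payoffs.\<close>
definition disc_pay ::
  "('k \<Rightarrow> 'l \<Rightarrow> 'a \<Rightarrow> 'b \<Rightarrow> real) \<Rightarrow> real \<Rightarrow> 'k pmf \<Rightarrow> 'l pmf
   \<Rightarrow> ('k,'a,'b) strat1 \<Rightarrow> ('l,'a,'b) strat2 \<Rightarrow> real" where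
  "disc_pay M lam p q \<sigma> \<tau> = (\<Sum>n. lam * (1 - lam) ^ n * stage_pay M p q \<sigma> \<tau> n)"

definition trunc_pay ::
  "('k \<Rightarrow> 'l \<Rightarrow> 'a \<Rightarrow> 'b \<Rightarrow> real) \<Rightarrow> real \<Rightarrow> nat \<Rightarrow> 'k pmf \<Rightarrow> 'l pmf
   \<Rightarrow> ('k,'a,'b) strat1 \<Rightarrow> ('l,'a,'b) strat2 \<Rightarrow> real" where
  "trunc_pay M lam T p q \<sigma> \<tau> = (\<Sum>n<T. lam * (1 - lam) ^ n * stage_pay M p q \<sigma> \<tau> n)"

text \<open>Values (player 1 maximises). These games have a value, so the value equals
  the max-min (sup-inf) value used here.\<close>
definition game_val ::
  "('k pmf \<Rightarrow> 'l pmf \<Rightarrow> ('k,'a,'b) strat1 \<Rightarrow> ('l,'a,'b) strat2 \<Rightarrow> real)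
   \<Rightarrow> 'k pmf \<Rightarrow> 'l pmf \<Rightarrow> real" where
  "game_val G p q = (SUP \<sigma>. INF \<tau>. G p q \<sigma> \<tau>)"

text \<open>Dual game 1: player 1 picks his type himself (with a lottery x over K),
  l \<sim> q; payoff E[mu^k + G].\<close>
definition dual_val1 ::
  "('k pmf \<Rightarrow> 'l pmf \<Rightarrow> ('k,'a,'b) strat1 \<Rightarrow> ('l,'a,'b) strat2 \<Rightarrow> real)
   \<Rightarrow> ('k \<Rightarrow> real) \<Rightarrow> 'l pmf \<Rightarrow> real" where
  "dual_val1 G \<mu> q = (SUP (x, \<sigma>). INF \<tau>.
      measure_pmf.expectation x \<mu> + G x q \<sigma> \<tau>)"

text \<open>Dual game 2: k \<sim> p, player 2 picks his type himself (with a lottery y over L);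
  payoff E[nu^l + G].\<close>
definition dual_val2 ::
  "('k pmf \<Rightarrow> 'l pmf \<Rightarrow> ('k,'a,'b) strat1 \<Rightarrow> ('l,'a,'b) strat2 \<Rightarrow> real)
   \<Rightarrow> 'k pmf \<Rightarrow> ('l \<Rightarrow> real) \<Rightarrow> real" where
  "dual_val2 G p \<nu> = (SUP \<sigma>. INF (y, \<tau>).
      measure_pmf.expectation y \<nu> + G p y \<sigma> \<tau>)"

end

theory Submission
  imports Defs
begin

(* Write V(p, q) for the value of the game, V1 and V2 for the dual values. The duals are
   partial Fenchel conjugates of V in the beliefs:
     V1(mu, q) = sup_p (E_p mu + V(p, q)),    V(p, q) = inf_mu (V1(mu, q) - E_p mu),
     V2(p, nu) = inf_q (E_q nu + V(p, q)),    V(p, q) = sup_nu (V2(p, nu) - E_q nu).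
   The first and the last formula are almost immediate (for the last one, player 2 answers each of
   his types separately). The second is Fenchel inversion: V is concave in p because player 1 can
   realise type-dependent mixtures of behaviour strategies (Kuhn), and it is Lipschitz, so a
   separating hyperplane of its hypograph yields an almost optimal mu. The third is a minimax
   theorem for player 2's choice of type, again proved by separation. Sups and infs of families
   are 1-Lipschitz in the sup-norm, so for two games a uniform bound on |V - V'| transfers to
   |V1 - V1'| and |V2 - V2'| and back. The discounted and the truncated game are two such games:
   both payoffs are bounded weighted sums of the expected stage payoffs. *)

section \<open>Expectations over finite types\<close>

lemma expectation_bind_pmf_bounded:
  fixes f :: "'b \<Rightarrow> real"
  assumes "\<And>x. \<bar>f x\<bar> \<le> B"
  shows "measure_pmf.expectation (bind_pmf M N) f
       = measure_pmf.expectation M (\<lambda>x. measure_pmf.expectation (N x) f)"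
  unfolding measure_pmf_bind
  by (rule integral_bind[where K = "count_space UNIV" and B = B and B' = 1])
     (use assms in \<open>auto intro: measure_pmf.finite_measure simp: measure_pmf_in_subprob_algebra\<close>)

lemma abs_expectation_le:
  fixes f :: "'b \<Rightarrow> real"
  assumes "\<And>x. \<bar>f x\<bar> \<le> c"
  shows "\<bar>measure_pmf.expectation M f\<bar> \<le> c"
proof -
  have "integrable (measure_pmf M) (\<lambda>x. \<bar>f x\<bar>)"
    by (rule measure_pmf.integrable_const_bound[where B = c]) (use assms in auto)
  then have "measure_pmf.expectation M (\<lambda>x. \<bar>f x\<bar>) \<le> c"
    by (rule measure_pmf.integral_le_const) (use assms in auto)
  then show ?thesis
    using integral_abs_bound[of M f] by linarith
qed

lemma sum_pmf_UNIV: "(\<Sum>k\<in>UNIV. pmf p k) = (1 :: real)" for p :: "'k::finite pmf"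
  by (rule sum_pmf_eq_1) auto

lemma expectation_finite:
  "measure_pmf.expectation y f = (\<Sum>l\<in>UNIV. pmf y l * f l)"
  for y :: "'l::finite pmf" and f :: "'l \<Rightarrow> real"
  by (subst integral_measure_pmf_real[where A = UNIV]) (auto simp: mult_ac)

lemma sum_pmf_return_mult: "(\<Sum>l\<in>UNIV. pmf (return_pmf x) l * f l) = f x"
  for f :: "'l::finite \<Rightarrow> real"
  by (simp add: indicator_def)

lemma pmf_average_ge:
  fixes y :: "'l::finite pmf" and f :: "'l \<Rightarrow> real"
  assumes "\<And>l. c \<le> f l"
  shows "c \<le> (\<Sum>l\<in>UNIV. pmf y l * f l)"
proof -
  have "c = (\<Sum>l\<in>UNIV. pmf y l * c)"
    by (simp add: sum_distrib_right[symmetric] sum_pmf_UNIV)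
  also have "\<dots> \<le> (\<Sum>l\<in>UNIV. pmf y l * f l)"
    by (intro sum_mono mult_left_mono assms) simp
  finally show ?thesis .
qed

lemma Min_le_pmf_average: "(MIN l. f l) \<le> (\<Sum>l\<in>UNIV. pmf y l * f l)"
  for y :: "'l::finite pmf" and f :: "'l \<Rightarrow> real"
  by (rule pmf_average_ge) simp

lemma abs_pmf_average_le:
  fixes y :: "'l::finite pmf" and f :: "'l \<Rightarrow> real"
  assumes "\<And>l. \<bar>f l\<bar> \<le> c"
  shows "\<bar>\<Sum>l\<in>UNIV. pmf y l * f l\<bar> \<le> c"
  using abs_expectation_le[of f c y] assms by (simp add: expectation_finite)

lemma abs_expectation_finite_le:
  "\<bar>measure_pmf.expectation y f\<bar> \<le> (\<Sum>l\<in>UNIV. \<bar>f l\<bar>)"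
  for y :: "'l::finite pmf" and f :: "'l \<Rightarrow> real"
  by (rule abs_expectation_le, rule member_le_sum) auto

lemma ex_pmf_with_weights:
  fixes w :: "'l::finite \<Rightarrow> real"
  assumes "\<And>l. 0 \<le> w l" and "(\<Sum>l\<in>UNIV. w l) = 1"
  obtains y where "\<And>l. pmf y l = w l"
proof -
  have "(\<integral>\<^sup>+x. ennreal (w x) \<partial>count_space UNIV) = 1"
    using assms by (simp add: nn_integral_count_space_finite)
  then show ?thesis
    using that pmf_embed_pmf[of w] assms by blast
qed

lemma ex_pmf_proportional:
  fixes w :: "'l::finite \<Rightarrow> real"
  assumes "\<And>l. 0 \<le> w l" and "0 < (\<Sum>l\<in>UNIV. w l)"
  obtains y where "\<And>l. pmf y l = w l / (\<Sum>l\<in>UNIV. w l)"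
proof (rule ex_pmf_with_weights)
  show "0 \<le> w l / (\<Sum>l\<in>UNIV. w l)" for l
    using assms by simp
  show "(\<Sum>l\<in>UNIV. w l / (\<Sum>l\<in>UNIV. w l)) = 1"
    using assms(2) by (simp add: sum_divide_distrib[symmetric])
qed (use that in blast)

section \<open>Histories and type-wise mixtures of behaviour strategies\<close>

definition likelihood1 :: "('k,'a,'b) strat1 \<Rightarrow> 'k \<Rightarrow> ('a \<times> 'b) list \<Rightarrow> real" where
  "likelihood1 \<sigma> k h = (\<Prod>i<length h. pmf (\<sigma> k (take i h)) (fst (h ! i)))"

definition likelihood2 :: "('l,'a,'b) strat2 \<Rightarrow> 'l \<Rightarrow> ('a \<times> 'b) list \<Rightarrow> real" where
  "likelihood2 \<tau> l h = (\<Prod>i<length h. pmf (\<tau> l (take i h)) (snd (h ! i)))"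

lemma likelihood1_Nil [simp]: "likelihood1 \<sigma> k [] = 1"
  by (simp add: likelihood1_def)

lemma likelihood1_snoc: "likelihood1 \<sigma> k (h @ [x]) = likelihood1 \<sigma> k h * pmf (\<sigma> k h) (fst x)"
  unfolding likelihood1_def by (simp add: nth_append)

lemma likelihood2_snoc: "likelihood2 \<tau> l (h @ [x]) = likelihood2 \<tau> l h * pmf (\<tau> l h) (snd x)"
  unfolding likelihood2_def by (simp add: nth_append)

lemma likelihood1_nonneg: "0 \<le> likelihood1 \<sigma> k h"
  unfolding likelihood1_def by (simp add: prod_nonneg)

lemma pmf_map_snoc_pair:
  "pmf (map_pmf (\<lambda>ab. x @ [ab]) (pair_pmf A B)) h =
     (if h \<noteq> [] \<and> butlast h = x then pmf A (fst (last h)) * pmf B (snd (last h)) else 0)"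
proof (cases "h \<noteq> [] \<and> butlast h = x")
  case True
  then have h: "h = x @ [last h]"
    by (metis append_butlast_last_id)
  have "inj (\<lambda>ab. x @ [ab])"
    by (auto simp: inj_def)
  then have "pmf (map_pmf (\<lambda>ab. x @ [ab]) (pair_pmf A B)) (x @ [last h]) = pmf (pair_pmf A B) (last h)"
    by (rule pmf_map_inj')
  then show ?thesis
    using True h by (metis pmf_pair prod.collapse)
next
  case False
  then show ?thesis
    by (intro trans[OF pmf_map_outside]) auto
qed

lemma hist_dist_Suc:
  "hist_dist \<sigma> \<tau> k l (Suc n) =
     bind_pmf (hist_dist \<sigma> \<tau> k l n) (\<lambda>h. map_pmf (\<lambda>ab. h @ [ab]) (pair_pmf (\<sigma> k h) (\<tau> l h)))"
  by (simp add: pair_pmf_def map_bind_pmf)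

lemma pmf_hist_dist:
  "pmf (hist_dist \<sigma> \<tau> k l n) h =
     (if length h = n then likelihood1 \<sigma> k h * likelihood2 \<tau> l h else 0)"
proof (induction n arbitrary: h)
  case 0
  then show ?case
    by (simp add: likelihood2_def)
next
  case (Suc n)
  show ?case
  proof (cases h rule: rev_cases)
    case Nil
    then show ?thesis
      unfolding hist_dist_Suc by (simp add: pmf_bind pmf_map_snoc_pair)
  next
    case (snoc h' x)
    have "pmf (hist_dist \<sigma> \<tau> k l (Suc n)) h = measure_pmf.expectation (hist_dist \<sigma> \<tau> k l n)
        (\<lambda>g. if h' = g then pmf (\<sigma> k g) (fst x) * pmf (\<tau> l g) (snd x) else 0)"
      unfolding hist_dist_Suc snoc by (simp add: pmf_bind pmf_map_snoc_pair cong: if_cong)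
    also have "\<dots> = pmf (hist_dist \<sigma> \<tau> k l n) h' * (pmf (\<sigma> k h') (fst x) * pmf (\<tau> l h') (snd x))"
      by (subst integral_measure_pmf_real[where A = "{h'}"]) (auto split: if_splits)
    also have "\<dots> = (if length h = Suc n then likelihood1 \<sigma> k h * likelihood2 \<tau> l h else 0)"
      unfolding snoc Suc.IH by (simp add: likelihood1_snoc likelihood2_snoc)
    finally show ?thesis .
  qed
qed

text \<open>Kuhn's theorem for the type-dependent mixture \<open>\<alpha> k \<sigma>1 + (1 - \<alpha> k) \<sigma>2\<close>:
  after history \<open>h\<close> player 1 plays \<open>\<sigma>1\<close> with the posterior probability of \<open>\<sigma>1\<close>
  given his own past moves.\<close>
definition mix_strat1 ::
  "('k \<Rightarrow> real) \<Rightarrow> ('k,'a,'b) strat1 \<Rightarrow> ('k,'a,'b) strat1 \<Rightarrow> ('k,'a,'b) strat1" where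
  "mix_strat1 \<alpha> \<sigma>1 \<sigma>2 k h =
     (let w1 = \<alpha> k * likelihood1 \<sigma>1 k h; w2 = (1 - \<alpha> k) * likelihood1 \<sigma>2 k h
      in if w1 + w2 = 0 then \<sigma>1 k h
         else bind_pmf (bernoulli_pmf (w1 / (w1 + w2))) (\<lambda>b. if b then \<sigma>1 k h else \<sigma>2 k h))"

lemma likelihood1_mix_strat1:
  assumes "0 \<le> \<alpha> k" "\<alpha> k \<le> 1"
  shows "likelihood1 (mix_strat1 \<alpha> \<sigma>1 \<sigma>2) k h =
           \<alpha> k * likelihood1 \<sigma>1 k h + (1 - \<alpha> k) * likelihood1 \<sigma>2 k h"
proof (induction h rule: rev_induct)
  case Nil
  then show ?case
    by simp
next
  case (snoc x h)
  define w1 where "w1 = \<alpha> k * likelihood1 \<sigma>1 k h"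
  define w2 where "w2 = (1 - \<alpha> k) * likelihood1 \<sigma>2 k h"
  have "0 \<le> w1" "0 \<le> w2"
    unfolding w1_def w2_def using assms by (simp_all add: likelihood1_nonneg)
  have IH: "likelihood1 (mix_strat1 \<alpha> \<sigma>1 \<sigma>2) k h = w1 + w2"
    using snoc unfolding w1_def w2_def .
  have "(w1 + w2) * pmf (mix_strat1 \<alpha> \<sigma>1 \<sigma>2 k h) (fst x)
      = w1 * pmf (\<sigma>1 k h) (fst x) + w2 * pmf (\<sigma>2 k h) (fst x)"
  proof (cases "w1 + w2 = 0")
    case True
    with \<open>0 \<le> w1\<close> \<open>0 \<le> w2\<close> have "w1 = 0" "w2 = 0"
      by linarith+
    then show ?thesis
      by simp
  next
    case False
    with \<open>0 \<le> w1\<close> \<open>0 \<le> w2\<close> have pos: "0 < w1 + w2"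
      by linarith
    have "1 - w1 / (w1 + w2) = w2 / (w1 + w2)"
      using pos by (simp add: field_simps)
    then have "pmf (mix_strat1 \<alpha> \<sigma>1 \<sigma>2 k h) (fst x) =
        w1 / (w1 + w2) * pmf (\<sigma>1 k h) (fst x) + w2 / (w1 + w2) * pmf (\<sigma>2 k h) (fst x)"
      using False pos \<open>0 \<le> w1\<close> \<open>0 \<le> w2\<close>
      by (simp add: mix_strat1_def Let_def pmf_bind w1_def[symmetric] w2_def[symmetric] mult_ac)
    moreover have "(w1 + w2) * (w1 / (w1 + w2)) = w1" "(w1 + w2) * (w2 / (w1 + w2)) = w2"
      using pos by simp_all
    ultimately show ?thesis
      by (simp only: distrib_left mult.assoc[symmetric])
  qed
  then show ?case
    unfolding likelihood1_snoc IH by (simp add: w1_def w2_def algebra_simps)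
qed

lemma hist_dist_mix_strat1:
  assumes "0 \<le> \<alpha> k" "\<alpha> k \<le> 1"
  shows "hist_dist (mix_strat1 \<alpha> \<sigma>1 \<sigma>2) \<tau> k l n =
    bind_pmf (bernoulli_pmf (\<alpha> k)) (\<lambda>b. if b then hist_dist \<sigma>1 \<tau> k l n else hist_dist \<sigma>2 \<tau> k l n)"
  by (rule pmf_eqI)
     (simp add: pmf_bind pmf_hist_dist likelihood1_mix_strat1[of \<alpha> k, OF assms] assms algebra_simps)

lemma hist_dist_cong:
  "\<sigma> k = \<sigma>' k \<Longrightarrow> \<tau> l = \<tau>' l \<Longrightarrow> hist_dist \<sigma> \<tau> k l n = hist_dist \<sigma>' \<tau>' k l n"
  by (induction n) auto

context
  fixes M :: "'k::finite \<Rightarrow> 'l::finite \<Rightarrow> 'a \<Rightarrow> 'b \<Rightarrow> real" and C :: real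
  assumes M_bounded: "\<And>k l a b. \<bar>M k l a b\<bar> \<le> C"
begin

lemma abs_stage_pay_le: "\<bar>stage_pay M p q \<sigma> \<tau> n\<bar> \<le> C"
  unfolding stage_pay_def
  by (auto split: prod.split intro!: abs_expectation_le M_bounded)

lemma stage_pay_return_last:
  "stage_pay M (return_pmf k) (return_pmf l) \<sigma> \<tau> n =
     measure_pmf.expectation (hist_dist \<sigma> \<tau> k l (Suc n)) (\<lambda>h. M k l (fst (last h)) (snd (last h)))"
  by (simp add: stage_pay_def expectation_bind_pmf_bounded[OF M_bounded])

lemma stage_pay_expand:
  "stage_pay M p q \<sigma> \<tau> n =
     (\<Sum>k\<in>UNIV. \<Sum>l\<in>UNIV. pmf p k * pmf q l * stage_pay M (return_pmf k) (return_pmf l) \<sigma> \<tau> n)"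
proof -
  have "stage_pay M p q \<sigma> \<tau> n =
      (\<Sum>(k, l)\<in>UNIV \<times> UNIV. pmf (pair_pmf p q) (k, l) * stage_pay M (return_pmf k) (return_pmf l) \<sigma> \<tau> n)"
    unfolding stage_pay_def
    by (subst integral_measure_pmf_real[where A = UNIV]) (auto simp: case_prod_beta mult_ac)
  then show ?thesis
    by (simp add: sum.cartesian_product pmf_pair)
qed

lemma stage_pay_return_cong:
  "\<sigma> k = \<sigma>' k \<Longrightarrow> \<tau> l = \<tau>' l \<Longrightarrow>
     stage_pay M (return_pmf k) (return_pmf l) \<sigma> \<tau> n = stage_pay M (return_pmf k) (return_pmf l) \<sigma>' \<tau>' n"
  using hist_dist_cong[of \<sigma> k \<sigma>' \<tau> l \<tau>' n] by (simp add: stage_pay_def)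

lemma stage_pay_return_mix_strat1:
  assumes "0 \<le> \<alpha> k" "\<alpha> k \<le> 1"
  shows "stage_pay M (return_pmf k) (return_pmf l) (mix_strat1 \<alpha> \<sigma>1 \<sigma>2) \<tau> n =
           \<alpha> k * stage_pay M (return_pmf k) (return_pmf l) \<sigma>1 \<tau> n
         + (1 - \<alpha> k) * stage_pay M (return_pmf k) (return_pmf l) \<sigma>2 \<tau> n"
  unfolding stage_pay_return_last hist_dist_mix_strat1[of \<alpha> k, OF assms]
  by (simp add: expectation_bind_pmf_bounded[OF M_bounded] assms)

end

section \<open>Suprema and infima of bounded real families\<close>

lemma abs_cSUP_diff_le:
  fixes f g :: "'i \<Rightarrow> real"
  assumes "\<And>i. \<bar>f i - g i\<bar> \<le> c" and "bdd_above (range f)" and "bdd_above (range g)"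
  shows "\<bar>(SUP i. f i) - (SUP i. g i)\<bar> \<le> c"
proof -
  have "f i \<le> (SUP i. g i) + c" "g i \<le> (SUP i. f i) + c" for i
    using assms(1)[of i] cSUP_upper[OF UNIV_I assms(3), of i] cSUP_upper[OF UNIV_I assms(2), of i]
    by linarith+
  then have "(SUP i. f i) \<le> (SUP i. g i) + c" "(SUP i. g i) \<le> (SUP i. f i) + c"
    by (simp_all add: cSUP_least)
  then show ?thesis
    by linarith
qed

lemma abs_cINF_diff_le:
  fixes f g :: "'i \<Rightarrow> real"
  assumes "\<And>i. \<bar>f i - g i\<bar> \<le> c" and "bdd_below (range f)" and "bdd_below (range g)"
  shows "\<bar>(INF i. f i) - (INF i. g i)\<bar> \<le> c"
proof -
  have "(INF i. g i) - c \<le> f i" "(INF i. f i) - c \<le> g i" for i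
    using assms(1)[of i] cINF_lower[OF assms(3), of i] cINF_lower[OF assms(2), of i]
    by (simp_all add: abs_le_iff)
  then have "(INF i. g i) - c \<le> (INF i. f i)" "(INF i. f i) - c \<le> (INF i. g i)"
    by (simp_all add: cINF_greatest)
  then show ?thesis
    by linarith
qed

lemma cSUP_prod:
  fixes h :: "'i \<Rightarrow> 'j \<Rightarrow> real"
  assumes "\<And>x y. h x y \<le> C"
  shows "(SUP (x, y). h x y) = (SUP x. SUP y. h x y)"
proof (rule antisym)
  have bdd: "bdd_above (range (h x))" for x
    using assms by (auto simp: bdd_above_def)
  have bdd_SUP: "bdd_above (range (\<lambda>x. SUP y. h x y))"
    using assms by (auto simp: bdd_above_def intro!: exI[of _ C] cSUP_least)
  have bdd_prod: "bdd_above (range (\<lambda>(x, y). h x y))"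
    using assms by (auto simp: bdd_above_def)
  show "(SUP (x, y). h x y) \<le> (SUP x. SUP y. h x y)"
    by (rule cSUP_least) (auto intro: cSUP_upper2[OF bdd_SUP UNIV_I] cSUP_upper[OF UNIV_I bdd])
  show "(SUP x. SUP y. h x y) \<le> (SUP (x, y). h x y)"
    by (intro cSUP_least) (auto intro: cSUP_upper[OF _ bdd_prod, of "(x, y)" for x y, simplified])
qed

lemma cSUP_eq_cSUP_same_upper_bounds:
  fixes f :: "'i \<Rightarrow> real" and g :: "'j \<Rightarrow> real"
  assumes "bdd_above (range f)"
    and "\<And>c j. (\<And>i. f i \<le> c) \<Longrightarrow> g j \<le> c"
    and "\<And>c i. (\<And>j. g j \<le> c) \<Longrightarrow> f i \<le> c"
  shows "(SUP i. f i) = (SUP j. g j)"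
proof -
  have g_le: "g j \<le> (SUP i. f i)" for j
    by (rule assms(2)) (rule cSUP_upper[OF UNIV_I assms(1)])
  then have "bdd_above (range g)"
    by (auto simp: bdd_above_def)
  then have "f i \<le> (SUP j. g j)" for i
    by (intro assms(3) cSUP_upper UNIV_I)
  then show ?thesis
    using g_le by (intro antisym cSUP_least) auto
qed

section \<open>Separating hyperplanes\<close>

lemma normal_nonneg_if_bounded_below_on_orthant:
  fixes a :: "real^'n"
  assumes "\<And>x. (\<And>j. c \<le> x$j) \<Longrightarrow> b \<le> inner a x"
  shows "0 \<le> a$i"
proof (rule ccontr)
  assume "\<not> 0 \<le> a$i"
  then have neg: "a$i < 0"
    by simp
  define t where "t = (\<bar>b\<bar> + \<bar>c * sum (($) a) UNIV\<bar> + 1) / - a$i"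
  have "0 \<le> t"
    using neg unfolding t_def by (intro divide_nonneg_pos) auto
  define x :: "real^'n" where "x = (\<chi> j. if j = i then c + t else c)"
  have "a$j * x$j = c * a$j + (if j = i then t * a$i else 0)" for j
    by (simp add: x_def algebra_simps)
  then have "inner a x = c * sum (($) a) UNIV + t * a$i"
    by (simp add: inner_vec_def sum.distrib sum_distrib_left)
  also have "t * a$i = - (\<bar>b\<bar> + \<bar>c * sum (($) a) UNIV\<bar> + 1)"
    using neg unfolding t_def by (simp add: field_simps)
  finally have "inner a x < - \<bar>b\<bar>"
    by linarith
  moreover have "b \<le> inner a x"
    using \<open>0 \<le> t\<close> by (intro assms) (simp add: x_def)
  ultimately show False
    by linarith
qed

lemma concave_like_minimax:
  fixes f :: "'i \<Rightarrow> 'l::finite \<Rightarrow> real"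
  assumes concave_like: "\<And>i1 i2 u. 0 \<le> u \<Longrightarrow> u \<le> 1 \<Longrightarrow> \<exists>i. \<forall>l. u * f i1 l + (1 - u) * f i2 l \<le> f i l"
    and exceeds: "\<And>y. \<exists>i. c < (\<Sum>l\<in>UNIV. pmf y l * f i l)"
  shows "\<exists>i. \<forall>l. c \<le> f i l"
proof (rule ccontr)
  assume none: "\<nexists>i. \<forall>l. c \<le> f i l"
  define S :: "(real^'l) set" where "S = {z. \<exists>i. \<forall>l. z$l \<le> f i l}"
  define T :: "(real^'l) set" where "T = {z. \<forall>l. c \<le> z$l}"
  have "convex S"
  proof (rule convexI)
    fix x y :: "real^'l" and u v :: real
    assume "x \<in> S" "y \<in> S" "0 \<le> u" "0 \<le> v" "u + v = 1"
    then obtain i1 i2 where x: "\<forall>l. x$l \<le> f i1 l" and y: "\<forall>l. y$l \<le> f i2 l"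
      and v: "v = 1 - u" and "u \<le> 1"
      unfolding S_def by auto
    then obtain i where i: "\<forall>l. u * f i1 l + v * f i2 l \<le> f i l"
      using concave_like[OF \<open>0 \<le> u\<close>] by blast
    have "u * x$l + v * y$l \<le> f i l" for l
      using x y i \<open>0 \<le> u\<close> \<open>0 \<le> v\<close> by (meson add_mono mult_left_mono order_trans)
    then show "u *\<^sub>R x + v *\<^sub>R y \<in> S"
      unfolding S_def by auto
  qed
  moreover have "convex T"
    unfolding T_def by (rule convex_box_cart) (simp add: atLeast_def[symmetric])
  moreover have "(\<chi> l. f undefined l) \<in> S" "(\<chi> l. c) \<in> T"
    unfolding S_def T_def by auto
  moreover have "S \<inter> T = {}"
    using none unfolding S_def T_def by (auto intro: order_trans)
  ultimately obtain a b where "a \<noteq> 0" and aS: "\<forall>z\<in>S. inner a z \<le> b" and aT: "\<forall>z\<in>T. b \<le> inner a z"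
    by (metis separating_hyperplane_sets empty_iff)
  have a_nonneg: "0 \<le> a$l" for l
    using aT by (intro normal_nonneg_if_bounded_below_on_orthant[of c b]) (auto simp: T_def)
  define s where "s = sum (($) a) UNIV"
  have "0 < s"
  proof -
    obtain l where "a$l \<noteq> 0"
      using \<open>a \<noteq> 0\<close> by (metis vec_eq_iff zero_index)
    then have "0 < a$l"
      using a_nonneg[of l] by simp
    also have "a$l \<le> s"
      unfolding s_def by (rule member_le_sum) (auto intro: a_nonneg)
    finally show ?thesis .
  qed
  then obtain y where y: "\<And>l. pmf y l = a$l / s"
    using ex_pmf_proportional[of "($) a"] a_nonneg unfolding s_def by blast
  obtain i where i: "c < (\<Sum>l\<in>UNIV. pmf y l * f i l)"
    using exceeds by blast
  have "(\<chi> l. f i l) \<in> S"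
    unfolding S_def by auto
  then have "(\<Sum>l\<in>UNIV. a$l * f i l) \<le> b"
    using aS by (auto simp: inner_vec_def)
  also have "b \<le> c * s"
    using aT[rule_format, of "\<chi> l. c"] by (simp add: T_def inner_vec_def s_def sum_distrib_left mult.commute)
  finally have "(\<Sum>l\<in>UNIV. pmf y l * f i l) \<le> c"
    using \<open>0 < s\<close> by (simp add: y sum_divide_distrib[symmetric] pos_divide_le_eq)
  with i show False
    by linarith
qed

lemma inner_min_in_ball_imp_zero:
  fixes a c :: "'a::real_inner"
  assumes "0 < \<delta>" and "\<And>z. z \<in> ball c \<delta> \<Longrightarrow> inner a c \<le> inner a z"
  shows "a = 0"
proof (rule ccontr)
  assume "a \<noteq> 0"
  then have "0 < norm a"
    by simp
  define z where "z = c - (\<delta> / (2 * norm a)) *\<^sub>R a"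
  have "z \<in> ball c \<delta>"
    using \<open>0 < norm a\<close> \<open>0 < \<delta>\<close> by (simp add: z_def dist_norm)
  then have "inner a c \<le> inner a z"
    by (rule assms(2))
  also have "inner a z = inner a c - \<delta> / 2 * norm a"
    using \<open>0 < norm a\<close>
    by (simp add: z_def inner_diff_right power2_norm_eq_inner[symmetric] power2_eq_square)
  finally have "\<delta> / 2 * norm a \<le> 0"
    by simp
  with \<open>0 < norm a\<close> \<open>0 < \<delta>\<close> show False
    by (simp add: mult_le_0_iff)
qed

definition pmf_vec :: "'k::finite pmf \<Rightarrow> real^'k" where
  "pmf_vec x = (\<chi> k. pmf x k)"

lemma expectation_eq_inner_pmf_vec:
  "measure_pmf.expectation x f = inner (\<chi> k. f k) (pmf_vec x)"
  for f :: "'k::finite \<Rightarrow> real"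
  by (simp add: expectation_finite pmf_vec_def inner_vec_def mult.commute)

lemma convex_hypograph_pmf_fun:
  fixes W :: "'k::finite pmf \<Rightarrow> real"
  assumes concave: "\<And>x1 x2 xm u. 0 \<le> u \<Longrightarrow> u \<le> 1 \<Longrightarrow>
      (\<And>k. pmf xm k = u * pmf x1 k + (1 - u) * pmf x2 k) \<Longrightarrow> u * W x1 + (1 - u) * W x2 \<le> W xm"
  shows "convex {(pmf_vec x, t) | x t. t \<le> W x}"
proof (rule convexI)
  fix w1 w2 :: "(real^'k) \<times> real" and u v :: real
  assume "w1 \<in> {(pmf_vec x, t) | x t. t \<le> W x}" "w2 \<in> {(pmf_vec x, t) | x t. t \<le> W x}"
    and "0 \<le> u" "0 \<le> v" "u + v = 1"
  then obtain x1 t1 x2 t2 where w: "w1 = (pmf_vec x1, t1)" "w2 = (pmf_vec x2, t2)"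
    and t: "t1 \<le> W x1" "t2 \<le> W x2" and v: "v = 1 - u"
    by auto
  obtain xm where xm: "\<And>k. pmf xm k = u * pmf x1 k + (1 - u) * pmf x2 k"
    by (rule ex_pmf_with_weights[of "\<lambda>k. u * pmf x1 k + (1 - u) * pmf x2 k"])
       (use \<open>0 \<le> u\<close> \<open>0 \<le> v\<close> v in \<open>auto simp: sum.distrib sum_distrib_left[symmetric] sum_pmf_UNIV\<close>)
  have "u * t1 + (1 - u) * t2 \<le> u * W x1 + (1 - u) * W x2"
    using t \<open>0 \<le> u\<close> \<open>0 \<le> v\<close> v by (intro add_mono mult_left_mono) auto
  also have "\<dots> \<le> W xm"
    using \<open>0 \<le> u\<close> \<open>0 \<le> v\<close> v xm by (intro concave) auto
  finally show "u *\<^sub>R w1 + v *\<^sub>R w2 \<in> {(pmf_vec x, t) | x t. t \<le> W x}"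
    unfolding w v by (auto simp: pmf_vec_def vec_eq_iff xm intro!: exI[of _ xm])
qed

text \<open>The conclusion says that \<open>- \<mu>\<close> is an \<open>e'\<close>-supergradient of \<open>W\<close> at \<open>p\<close>.\<close>
lemma concave_pmf_fun_supergradient:
  fixes W :: "'k::finite pmf \<Rightarrow> real"
  assumes concave: "\<And>x1 x2 xm u. 0 \<le> u \<Longrightarrow> u \<le> 1 \<Longrightarrow>
      (\<And>k. pmf xm k = u * pmf x1 k + (1 - u) * pmf x2 k) \<Longrightarrow> u * W x1 + (1 - u) * W x2 \<le> W xm"
    and "0 < \<delta>" and near: "\<And>x. dist (pmf_vec x) (pmf_vec p) < \<delta> \<Longrightarrow> W x \<le> W p + e"
    and "e < e'"
  obtains \<mu> where "\<And>x. measure_pmf.expectation x \<mu> + W x \<le> measure_pmf.expectation p \<mu> + W p + e'"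
proof -
  define A where "A = {(pmf_vec x, t) | x t. t \<le> W x}"
  define S where "S = ball (pmf_vec p) \<delta> \<times> {W p + e <..}"
  have "0 < e'"
    using near[of p] \<open>0 < \<delta>\<close> \<open>e < e'\<close> by simp
  have "convex A"
    unfolding A_def using concave by (rule convex_hypograph_pmf_fun)
  moreover have "convex S"
    unfolding S_def by (intro convex_Times convex_ball) auto
  moreover have pA: "(pmf_vec p, W p) \<in> A" and pS: "(pmf_vec p, W p + e') \<in> S"
    unfolding A_def S_def using \<open>0 < \<delta>\<close> \<open>e < e'\<close> by auto
  moreover have "A \<inter> S = {}"
    using near unfolding A_def S_def by (force simp: dist_commute)
  ultimately obtain w b where "w \<noteq> 0" and wA: "\<forall>z\<in>A. inner w z \<le> b" and wS: "\<forall>z\<in>S. b \<le> inner w z"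
    by (metis separating_hyperplane_sets empty_iff)
  obtain a d where w: "w = (a, d)"
    by fastforce
  have h1: "inner a (pmf_vec p) + d * W p \<le> b" and h2: "b \<le> inner a (pmf_vec p) + d * (W p + e')"
    using wA pA wS pS by (auto simp: w)
  have "0 < d"
  proof (rule ccontr)
    assume "\<not> 0 < d"
    moreover have "0 \<le> d * e'"
      using h1 h2 by (simp add: algebra_simps)
    ultimately have "d = 0"
      using \<open>0 < e'\<close> by (simp add: zero_le_mult_iff)
    have "inner a (pmf_vec p) \<le> inner a z" if "z \<in> ball (pmf_vec p) \<delta>" for z
    proof -
      have "(z, W p + e') \<in> S"
        using that \<open>e < e'\<close> unfolding S_def by auto
      then have "b \<le> inner a z"
        using wS \<open>d = 0\<close> by (auto simp: w)
      with h1 \<open>d = 0\<close> show ?thesis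
        by simp
    qed
    then have "a = 0"
      by (rule inner_min_in_ball_imp_zero[OF \<open>0 < \<delta>\<close>])
    with \<open>d = 0\<close> \<open>w \<noteq> 0\<close> show False
      by (simp add: w zero_prod_def)
  qed
  show ?thesis
  proof (rule that[of "\<lambda>k. a$k / d"])
    fix x
    have "inner a (pmf_vec x) + d * W x \<le> b"
      using wA unfolding A_def w by auto
    with h2 have "inner a (pmf_vec x) + d * W x \<le> inner a (pmf_vec p) + d * (W p + e')"
      by linarith
    then have "(inner a (pmf_vec x) + d * W x) / d \<le> (inner a (pmf_vec p) + d * (W p + e')) / d"
      using \<open>0 < d\<close> by (intro divide_right_mono) auto
    moreover have "measure_pmf.expectation y (\<lambda>k. a$k / d) = inner a (pmf_vec y) / d" for y
      by (simp add: expectation_eq_inner_pmf_vec inner_vec_def sum_divide_distrib)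
    ultimately show "measure_pmf.expectation x (\<lambda>k. a$k / d) + W x
        \<le> measure_pmf.expectation p (\<lambda>k. a$k / d) + W p + e'"
      using \<open>0 < d\<close> by (simp add: add_divide_distrib algebra_simps)
  qed
qed

lemma sum_abs_pmf_diff_le_dist:
  "(\<Sum>k\<in>UNIV. \<bar>pmf x k - pmf p k\<bar>) \<le> real CARD('k) * dist (pmf_vec x) (pmf_vec p)"
  for x p :: "'k::finite pmf"
proof -
  have "\<bar>pmf x k - pmf p k\<bar> \<le> dist (pmf_vec x) (pmf_vec p)" for k
    using component_le_norm_cart[of "pmf_vec x - pmf_vec p" k] by (simp add: pmf_vec_def dist_norm)
  then show ?thesis
    using sum_bounded_above[of UNIV "\<lambda>k. \<bar>pmf x k - pmf p k\<bar>"] by simp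
qed

section \<open>Payoffs of games with incomplete information on both sides\<close>

locale incomplete_info_payoff =
  fixes G :: "'k::finite pmf \<Rightarrow> 'l::finite pmf \<Rightarrow> ('k,'a,'b) strat1 \<Rightarrow> ('l,'a,'b) strat2 \<Rightarrow> real"
    and B :: real
  assumes expand_types: "G p q \<sigma> \<tau> =
      (\<Sum>k\<in>UNIV. \<Sum>l\<in>UNIV. pmf p k * pmf q l * G (return_pmf k) (return_pmf l) \<sigma> \<tau>)"
    and abs_pure_le: "\<bar>G (return_pmf k) (return_pmf l) \<sigma> \<tau>\<bar> \<le> B"
    and pure_cong_strat2: "\<tau> l = \<tau>' l \<Longrightarrow> G (return_pmf k) (return_pmf l) \<sigma> \<tau> = G (return_pmf k) (return_pmf l) \<sigma> \<tau>'"
    and typewise_mixture: "(\<And>k. 0 \<le> \<alpha> k \<and> \<alpha> k \<le> 1) \<Longrightarrow> \<exists>\<sigma>. \<forall>k l \<tau>.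
      G (return_pmf k) (return_pmf l) \<sigma> \<tau> =
        \<alpha> k * G (return_pmf k) (return_pmf l) \<sigma>1 \<tau> + (1 - \<alpha> k) * G (return_pmf k) (return_pmf l) \<sigma>2 \<tau>"

lemma summable_weighted_bounded:
  fixes w s :: "nat \<Rightarrow> real"
  assumes "\<And>n. 0 \<le> w n" and "summable w" and "\<And>n. \<bar>s n\<bar> \<le> C"
  shows "summable (\<lambda>n. w n * s n)"
  by (rule summable_comparison_test'[where N = 0, OF summable_mult2[OF assms(2), of C]])
     (use assms in \<open>auto simp: abs_mult intro: mult_left_mono\<close>)

lemma abs_suminf_weighted_le:
  fixes w s :: "nat \<Rightarrow> real"
  assumes "\<And>n. 0 \<le> w n" and "summable w" and "\<And>n. \<bar>s n\<bar> \<le> C"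
  shows "\<bar>\<Sum>n. w n * s n\<bar> \<le> C * (\<Sum>n. w n)"
proof -
  have le: "\<bar>w n * s n\<bar> \<le> w n * C" for n
    using assms by (auto simp: abs_mult intro: mult_left_mono)
  have "summable (\<lambda>n. \<bar>w n * s n\<bar>)"
    by (rule summable_comparison_test'[where N = 0, OF summable_mult2[OF assms(2), of C]]) (use le in auto)
  then have "\<bar>\<Sum>n. w n * s n\<bar> \<le> (\<Sum>n. \<bar>w n * s n\<bar>)"
    by (rule summable_rabs)
  also have "\<dots> \<le> (\<Sum>n. w n * C)"
    by (rule suminf_le[OF le \<open>summable (\<lambda>n. \<bar>w n * s n\<bar>)\<close> summable_mult2[OF assms(2)]])
  finally show ?thesis
    using suminf_mult2[OF assms(2), of C] by (simp add: mult.commute)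
qed

lemma incomplete_info_payoff_weighted_stages:
  fixes M :: "'k::finite \<Rightarrow> 'l::finite \<Rightarrow> 'a \<Rightarrow> 'b \<Rightarrow> real" and w :: "nat \<Rightarrow> real"
  assumes M_bounded: "\<And>k l a b. \<bar>M k l a b\<bar> \<le> C" and w: "\<And>n. 0 \<le> w n" "summable w"
  shows "incomplete_info_payoff (\<lambda>p q \<sigma> \<tau>. \<Sum>n. w n * stage_pay M p q \<sigma> \<tau> n) (C * (\<Sum>n. w n))"
proof -
  have summable: "summable (\<lambda>n. w n * stage_pay M p q \<sigma> \<tau> n)" for p q \<sigma> \<tau>
    using w abs_stage_pay_le[OF M_bounded] by (rule summable_weighted_bounded)
  let ?s = "\<lambda>k l \<sigma> \<tau> n. stage_pay M (return_pmf k) (return_pmf l) \<sigma> \<tau> n"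
  show ?thesis
  proof
    fix p q \<sigma> \<tau>
    have "(\<Sum>n. w n * stage_pay M p q \<sigma> \<tau> n)
        = (\<Sum>n. \<Sum>k\<in>UNIV. \<Sum>l\<in>UNIV. pmf p k * pmf q l * (w n * ?s k l \<sigma> \<tau> n))"
      by (simp add: stage_pay_expand[OF M_bounded, where p = p and q = q] sum_distrib_left mult_ac)
    also have "\<dots> = (\<Sum>k\<in>UNIV. \<Sum>l\<in>UNIV. \<Sum>n. pmf p k * pmf q l * (w n * ?s k l \<sigma> \<tau> n))"
      by (simp add: suminf_sum summable_sum summable_mult summable)
    also have "\<dots> = (\<Sum>k\<in>UNIV. \<Sum>l\<in>UNIV. pmf p k * pmf q l * (\<Sum>n. w n * ?s k l \<sigma> \<tau> n))"
      by (simp add: suminf_mult summable)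
    finally show "(\<Sum>n. w n * stage_pay M p q \<sigma> \<tau> n)
        = (\<Sum>k\<in>UNIV. \<Sum>l\<in>UNIV. pmf p k * pmf q l * (\<Sum>n. w n * ?s k l \<sigma> \<tau> n))" .
  next
    fix k l \<sigma> \<tau>
    show "\<bar>\<Sum>n. w n * ?s k l \<sigma> \<tau> n\<bar> \<le> C * (\<Sum>n. w n)"
      using w abs_stage_pay_le[OF M_bounded] by (rule abs_suminf_weighted_le)
  next
    fix k l \<sigma> and \<tau> \<tau>' :: "('l,'a,'b) strat2"
    assume "\<tau> l = \<tau>' l"
    then show "(\<Sum>n. w n * ?s k l \<sigma> \<tau> n) = (\<Sum>n. w n * ?s k l \<sigma> \<tau>' n)"
      using stage_pay_return_cong[OF M_bounded, of \<sigma> k \<sigma> \<tau> l \<tau>'] by simp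
  next
    fix \<alpha> :: "'k \<Rightarrow> real" and \<sigma>1 \<sigma>2
    assume \<alpha>: "\<And>k. 0 \<le> \<alpha> k \<and> \<alpha> k \<le> 1"
    have "(\<Sum>n. w n * ?s k l (mix_strat1 \<alpha> \<sigma>1 \<sigma>2) \<tau> n)
        = \<alpha> k * (\<Sum>n. w n * ?s k l \<sigma>1 \<tau> n) + (1 - \<alpha> k) * (\<Sum>n. w n * ?s k l \<sigma>2 \<tau> n)" for k l \<tau>
    proof -
      have "(\<Sum>n. w n * ?s k l (mix_strat1 \<alpha> \<sigma>1 \<sigma>2) \<tau> n)
          = (\<Sum>n. \<alpha> k * (w n * ?s k l \<sigma>1 \<tau> n) + (1 - \<alpha> k) * (w n * ?s k l \<sigma>2 \<tau> n))"
        using \<alpha>[of k] by (simp add: stage_pay_return_mix_strat1[OF M_bounded] algebra_simps)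
      also have "\<dots> = \<alpha> k * (\<Sum>n. w n * ?s k l \<sigma>1 \<tau> n) + (1 - \<alpha> k) * (\<Sum>n. w n * ?s k l \<sigma>2 \<tau> n)"
        by (subst suminf_add[symmetric]) (auto intro: summable_mult summable simp: suminf_mult summable)
      finally show ?thesis .
    qed
    then show "\<exists>\<sigma>. \<forall>k l \<tau>. (\<Sum>n. w n * ?s k l \<sigma> \<tau> n)
        = \<alpha> k * (\<Sum>n. w n * ?s k l \<sigma>1 \<tau> n) + (1 - \<alpha> k) * (\<Sum>n. w n * ?s k l \<sigma>2 \<tau> n)"
      by blast
  qed
qed

definition guarantee ::
  "('k pmf \<Rightarrow> 'l pmf \<Rightarrow> ('k,'a,'b) strat1 \<Rightarrow> ('l,'a,'b) strat2 \<Rightarrow> real)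
   \<Rightarrow> 'k pmf \<Rightarrow> 'l pmf \<Rightarrow> ('k,'a,'b) strat1 \<Rightarrow> real" where
  "guarantee G p q \<sigma> = (INF \<tau>. G p q \<sigma> \<tau>)"

context incomplete_info_payoff
begin

lemma expand_return_left:
  "G (return_pmf k) q \<sigma> \<tau> = (\<Sum>l\<in>UNIV. pmf q l * G (return_pmf k) (return_pmf l) \<sigma> \<tau>)"
proof -
  have "G (return_pmf k) q \<sigma> \<tau> = (\<Sum>k'\<in>UNIV. pmf (return_pmf k) k' *
      (\<Sum>l\<in>UNIV. pmf q l * G (return_pmf k') (return_pmf l) \<sigma> \<tau>))"
    by (subst expand_types) (simp only: sum_distrib_left mult.assoc)
  then show ?thesis
    by (simp only: sum_pmf_return_mult)
qed

lemma expand_return_right: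
  "G p (return_pmf l) \<sigma> \<tau> = (\<Sum>k\<in>UNIV. pmf p k * G (return_pmf k) (return_pmf l) \<sigma> \<tau>)"
proof -
  have "G p (return_pmf l) \<sigma> \<tau> = (\<Sum>k\<in>UNIV. pmf p k *
      (\<Sum>l'\<in>UNIV. pmf (return_pmf l) l' * G (return_pmf k) (return_pmf l') \<sigma> \<tau>))"
    by (subst expand_types) (simp only: sum_distrib_left mult.assoc)
  then show ?thesis
    by (simp only: sum_pmf_return_mult)
qed

lemma expand_left: "G x q \<sigma> \<tau> = (\<Sum>k\<in>UNIV. pmf x k * G (return_pmf k) q \<sigma> \<tau>)"
proof -
  have "G x q \<sigma> \<tau> = (\<Sum>k\<in>UNIV. pmf x k * (\<Sum>l\<in>UNIV. pmf q l * G (return_pmf k) (return_pmf l) \<sigma> \<tau>))"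
    by (subst expand_types) (simp only: sum_distrib_left mult.assoc)
  then show ?thesis
    by (simp only: expand_return_left[symmetric])
qed

lemma expand_right: "G p y \<sigma> \<tau> = (\<Sum>l\<in>UNIV. pmf y l * G p (return_pmf l) \<sigma> \<tau>)"
proof -
  have "G p y \<sigma> \<tau> = (\<Sum>l\<in>UNIV. pmf y l * (\<Sum>k\<in>UNIV. pmf p k * G (return_pmf k) (return_pmf l) \<sigma> \<tau>))"
    by (subst expand_types, subst sum.swap) (simp add: sum_distrib_left mult_ac)
  then show ?thesis
    by (simp only: expand_return_right[symmetric])
qed

lemma abs_payoff_le: "\<bar>G p q \<sigma> \<tau>\<bar> \<le> B"
  unfolding expand_left[of p]
  by (intro abs_pmf_average_le, subst expand_return_left) (intro abs_pmf_average_le abs_pure_le)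

lemma payoff_ge: "- B \<le> G p q \<sigma> \<tau>"
  using abs_payoff_le[of p q \<sigma> \<tau>] by linarith

lemma bdd_below_payoff: "bdd_below (range (G p q \<sigma>))"
  by (rule bdd_belowI2[where m = "- B"]) (rule payoff_ge)

lemma B_nonneg: "0 \<le> B"
  using abs_pure_le[of undefined undefined undefined undefined] by linarith

lemma guarantee_le: "guarantee G p q \<sigma> \<le> G p q \<sigma> \<tau>"
  unfolding guarantee_def by (rule cINF_lower[OF bdd_below_payoff UNIV_I])

lemma abs_guarantee_le: "\<bar>guarantee G p q \<sigma>\<bar> \<le> B"
proof -
  have "-B \<le> guarantee G p q \<sigma>"
    unfolding guarantee_def by (intro cINF_greatest payoff_ge) simp
  moreover have "guarantee G p q \<sigma> \<le> B"
    using guarantee_le[of p q \<sigma> undefined] abs_payoff_le[of p q \<sigma> undefined] by linarith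
  ultimately show ?thesis
    by linarith
qed

lemma game_val_eq_SUP_guarantee: "game_val G p q = (SUP \<sigma>. guarantee G p q \<sigma>)"
  by (simp add: game_val_def guarantee_def)

lemma bdd_above_guarantee: "bdd_above (range (guarantee G p q))"
  by (rule bdd_aboveI2[where M = B]) (use abs_guarantee_le in \<open>simp add: abs_le_iff\<close>)

lemma guarantee_le_game_val: "guarantee G p q \<sigma> \<le> game_val G p q"
  unfolding game_val_eq_SUP_guarantee by (rule cSUP_upper[OF UNIV_I bdd_above_guarantee])

lemma abs_game_val_le: "\<bar>game_val G p q\<bar> \<le> B"
proof -
  have "game_val G p q \<le> B"
    unfolding game_val_eq_SUP_guarantee using abs_guarantee_le
    by (intro cSUP_least) (auto simp: abs_le_iff)
  moreover have "-B \<le> game_val G p q"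
    using guarantee_le_game_val[of p q undefined] abs_guarantee_le[of p q undefined] by linarith
  ultimately show ?thesis
    by linarith
qed

text \<open>Player 2 may answer each of his types separately: near-optimal replies for the
  individual types glue into one strategy because \<open>G\<close> depends on \<open>\<tau>\<close> only through \<open>\<tau> l\<close>.\<close>
lemma guarantee_expand_right:
  "guarantee G p y \<sigma> = (\<Sum>l\<in>UNIV. pmf y l * guarantee G p (return_pmf l) \<sigma>)"
proof (rule antisym)
  show "(\<Sum>l\<in>UNIV. pmf y l * guarantee G p (return_pmf l) \<sigma>) \<le> guarantee G p y \<sigma>"
    unfolding guarantee_def[of G p y]
    by (intro cINF_greatest) (auto simp: expand_right[of p y] intro!: sum_mono mult_left_mono guarantee_le)
  show "guarantee G p y \<sigma> \<le> (\<Sum>l\<in>UNIV. pmf y l * guarantee G p (return_pmf l) \<sigma>)"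
  proof (rule field_le_epsilon)
    fix e :: real
    assume "0 < e"
    have "\<exists>\<tau>. G p (return_pmf l) \<sigma> \<tau> < guarantee G p (return_pmf l) \<sigma> + e" for l
    proof -
      have "(INF \<tau>. G p (return_pmf l) \<sigma> \<tau>) < guarantee G p (return_pmf l) \<sigma> + e"
        using \<open>0 < e\<close> by (simp add: guarantee_def)
      then show ?thesis
        by (subst (asm) cINF_less_iff[OF UNIV_not_empty bdd_below_payoff]) auto
    qed
    then obtain t where t: "\<And>l. G p (return_pmf l) \<sigma> (t l) < guarantee G p (return_pmf l) \<sigma> + e"
      by metis
    have t_glued: "G p (return_pmf l) \<sigma> (\<lambda>l'. t l' l') = G p (return_pmf l) \<sigma> (t l)" for l
      unfolding expand_return_right[of p] by (intro sum.cong refl arg_cong2[where f = "(*)"] pure_cong_strat2)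
    have "guarantee G p y \<sigma> \<le> G p y \<sigma> (\<lambda>l'. t l' l')"
      by (rule guarantee_le)
    also have "\<dots> \<le> (\<Sum>l\<in>UNIV. pmf y l * (guarantee G p (return_pmf l) \<sigma> + e))"
      unfolding expand_right[of p y] t_glued by (intro sum_mono mult_left_mono less_imp_le[OF t]) auto
    also have "\<dots> = (\<Sum>l\<in>UNIV. pmf y l * guarantee G p (return_pmf l) \<sigma>) + e"
      by (simp add: distrib_left sum.distrib sum_distrib_right[symmetric] sum_pmf_UNIV)
    finally show "guarantee G p y \<sigma> \<le> (\<Sum>l\<in>UNIV. pmf y l * guarantee G p (return_pmf l) \<sigma>) + e" .
  qed
qed

lemma near_optimal_strategy:
  assumes "0 < e"
  obtains \<sigma> where "game_val G p q - e < guarantee G p q \<sigma>"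
  using less_cSUP_iff[OF UNIV_not_empty bdd_above_guarantee, of "game_val G p q - e" p q] assms
  by (auto simp: game_val_eq_SUP_guarantee)

text \<open>Splitting: player 1 reaches the belief \<open>u x + (1 - u) y\<close> by playing \<open>\<sigma>1\<close> with the
  posterior probability \<open>u x k / z k\<close> of having been drawn from \<open>x\<close>.\<close>
lemma payoff_mixture:
  assumes u: "0 \<le> u" "u \<le> 1" and z: "\<And>k. pmf z k = u * pmf x k + (1 - u) * pmf y k"
  obtains \<sigma> where "\<And>q \<tau>. G z q \<sigma> \<tau> = u * G x q \<sigma>1 \<tau> + (1 - u) * G y q \<sigma>2 \<tau>"
proof -
  define \<alpha> where "\<alpha> k = (if pmf z k = 0 then 1 else u * pmf x k / pmf z k)" for k
  have w_nonneg: "0 \<le> u * pmf x k" "0 \<le> (1 - u) * pmf y k" for k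
    using u by simp_all
  have \<alpha>: "0 \<le> \<alpha> k \<and> \<alpha> k \<le> 1" for k
    using w_nonneg[of k] z[of k] unfolding \<alpha>_def by (auto simp: divide_le_eq)
  have w1: "pmf z k * \<alpha> k = u * pmf x k" and w2: "pmf z k * (1 - \<alpha> k) = (1 - u) * pmf y k" for k
    using w_nonneg[of k] z[of k] unfolding \<alpha>_def by (auto simp: algebra_simps)
  obtain \<sigma> where \<sigma>: "\<forall>k l \<tau>. G (return_pmf k) (return_pmf l) \<sigma> \<tau> =
      \<alpha> k * G (return_pmf k) (return_pmf l) \<sigma>1 \<tau> + (1 - \<alpha> k) * G (return_pmf k) (return_pmf l) \<sigma>2 \<tau>"
    using typewise_mixture \<alpha> by blast
  have "G z q \<sigma> \<tau> = u * G x q \<sigma>1 \<tau> + (1 - u) * G y q \<sigma>2 \<tau>" for q \<tau>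
  proof -
    have pure: "G (return_pmf k) q \<sigma> \<tau> = \<alpha> k * G (return_pmf k) q \<sigma>1 \<tau> + (1 - \<alpha> k) * G (return_pmf k) q \<sigma>2 \<tau>" for k
      unfolding expand_return_left[of k q] \<sigma>[rule_format]
      by (simp add: distrib_left sum.distrib sum_distrib_left mult.left_commute)
    have "G z q \<sigma> \<tau> = (\<Sum>k\<in>UNIV. pmf z k * \<alpha> k * G (return_pmf k) q \<sigma>1 \<tau>
        + pmf z k * (1 - \<alpha> k) * G (return_pmf k) q \<sigma>2 \<tau>)"
      unfolding expand_left[of z] pure by (simp add: algebra_simps)
    also have "\<dots> = u * G x q \<sigma>1 \<tau> + (1 - u) * G y q \<sigma>2 \<tau>"
      unfolding w1 w2 expand_left[of x] expand_left[of y]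
      by (simp add: sum.distrib sum_distrib_left mult.assoc)
    finally show ?thesis .
  qed
  then show ?thesis
    using that by blast
qed

lemma guarantee_mixture:
  assumes u: "0 \<le> u" "u \<le> 1" and z: "\<And>k. pmf z k = u * pmf x k + (1 - u) * pmf y k"
  obtains \<sigma> where "\<And>q. u * guarantee G x q \<sigma>1 + (1 - u) * guarantee G y q \<sigma>2 \<le> guarantee G z q \<sigma>"
proof -
  obtain \<sigma> where \<sigma>: "\<And>q \<tau>. G z q \<sigma> \<tau> = u * G x q \<sigma>1 \<tau> + (1 - u) * G y q \<sigma>2 \<tau>"
    using payoff_mixture[OF assms] by blast
  have "u * guarantee G x q \<sigma>1 + (1 - u) * guarantee G y q \<sigma>2 \<le> guarantee G z q \<sigma>" for q
    unfolding guarantee_def[of G z q \<sigma>] \<sigma>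
    using u by (intro cINF_greatest add_mono mult_left_mono guarantee_le) auto
  then show ?thesis
    using that by blast
qed

lemma game_val_concave:
  assumes u: "0 \<le> u" "u \<le> 1" and z: "\<And>k. pmf z k = u * pmf x k + (1 - u) * pmf y k"
  shows "u * game_val G x q + (1 - u) * game_val G y q \<le> game_val G z q"
proof (rule field_le_epsilon)
  fix e :: real
  assume "0 < e"
  obtain \<sigma>1 \<sigma>2 where \<sigma>1: "game_val G x q - e < guarantee G x q \<sigma>1"
    and \<sigma>2: "game_val G y q - e < guarantee G y q \<sigma>2"
    using near_optimal_strategy[OF \<open>0 < e\<close>] by metis
  obtain \<sigma> where \<sigma>: "u * guarantee G x q \<sigma>1 + (1 - u) * guarantee G y q \<sigma>2 \<le> guarantee G z q \<sigma>"
    using guarantee_mixture[OF assms] by blast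
  have "u * (game_val G x q - e) + (1 - u) * (game_val G y q - e)
      \<le> u * guarantee G x q \<sigma>1 + (1 - u) * guarantee G y q \<sigma>2"
    using \<sigma>1 \<sigma>2 u by (intro add_mono mult_left_mono) auto
  also have "\<dots> \<le> game_val G z q"
    using \<sigma> guarantee_le_game_val[of z q \<sigma>] by linarith
  finally show "u * game_val G x q + (1 - u) * game_val G y q \<le> game_val G z q + e"
    by (simp add: algebra_simps)
qed

lemma game_val_lipschitz:
  "\<bar>game_val G x q - game_val G x' q\<bar> \<le> B * (\<Sum>k\<in>UNIV. \<bar>pmf x k - pmf x' k\<bar>)"
proof -
  have "\<bar>G x q \<sigma> \<tau> - G x' q \<sigma> \<tau>\<bar> \<le> B * (\<Sum>k\<in>UNIV. \<bar>pmf x k - pmf x' k\<bar>)" for \<sigma> \<tau>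
  proof -
    have "\<bar>G x q \<sigma> \<tau> - G x' q \<sigma> \<tau>\<bar> = \<bar>\<Sum>k\<in>UNIV. (pmf x k - pmf x' k) * G (return_pmf k) q \<sigma> \<tau>\<bar>"
      unfolding expand_left[of x] expand_left[of x'] by (simp add: sum_subtractf left_diff_distrib)
    also have "\<dots> \<le> (\<Sum>k\<in>UNIV. \<bar>pmf x k - pmf x' k\<bar> * B)"
      by (intro order.trans[OF sum_abs] sum_mono) (simp add: abs_mult mult_left_mono abs_payoff_le)
    finally show ?thesis
      by (simp add: sum_distrib_left mult.commute)
  qed
  then have "\<bar>guarantee G x q \<sigma> - guarantee G x' q \<sigma>\<bar> \<le> B * (\<Sum>k\<in>UNIV. \<bar>pmf x k - pmf x' k\<bar>)" for \<sigma>
    unfolding guarantee_def by (intro abs_cINF_diff_le bdd_below_payoff)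
  then show ?thesis
    unfolding game_val_eq_SUP_guarantee by (intro abs_cSUP_diff_le bdd_above_guarantee)
qed

lemma game_val_le_nearby:
  assumes "0 < e"
  obtains \<delta> where "0 < \<delta>"
    and "\<And>x. dist (pmf_vec x) (pmf_vec p) < \<delta> \<Longrightarrow> game_val G x q \<le> game_val G p q + e"
proof
  define L where "L = B * real CARD('k)"
  have "0 \<le> L"
    unfolding L_def using B_nonneg by simp
  show "0 < e / (L + 1)"
    using \<open>0 < e\<close> \<open>0 \<le> L\<close> by simp
  fix x
  assume "dist (pmf_vec x) (pmf_vec p) < e / (L + 1)"
  then have "L * dist (pmf_vec x) (pmf_vec p) \<le> L * (e / (L + 1))"
    using \<open>0 \<le> L\<close> by (intro mult_left_mono) auto
  also have "\<dots> \<le> e"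
    using \<open>0 < e\<close> \<open>0 \<le> L\<close> by (simp add: field_simps)
  finally have "B * (\<Sum>k\<in>UNIV. \<bar>pmf x k - pmf p k\<bar>) \<le> e"
    using mult_left_mono[OF sum_abs_pmf_diff_le_dist[of x p] B_nonneg] unfolding L_def
    by (simp add: mult.assoc)
  then show "game_val G x q \<le> game_val G p q + e"
    using game_val_lipschitz[of x q p] by linarith
qed

lemma bdd_above_expectation_plus_game_val: "bdd_above (range (\<lambda>x. measure_pmf.expectation x \<mu> + game_val G x q))"
proof (rule bdd_aboveI2)
  show "measure_pmf.expectation x \<mu> + game_val G x q \<le> (\<Sum>k\<in>UNIV. \<bar>\<mu> k\<bar>) + B" for x
    using abs_expectation_finite_le[of x \<mu>] abs_game_val_le[of x q] by linarith
qed

lemma dual_val1_eq_SUP_game_val: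
  "dual_val1 G \<mu> q = (SUP x. measure_pmf.expectation x \<mu> + game_val G x q)"
proof -
  have "dual_val1 G \<mu> q = (SUP (x, \<sigma>). measure_pmf.expectation x \<mu> + guarantee G x q \<sigma>)"
    unfolding dual_val1_def guarantee_def by (simp add: Inf_add_eq bdd_below_payoff)
  also have "\<dots> = (SUP x. SUP \<sigma>. measure_pmf.expectation x \<mu> + guarantee G x q \<sigma>)"
  proof (rule cSUP_prod)
    show "measure_pmf.expectation x \<mu> + guarantee G x q \<sigma> \<le> (\<Sum>k\<in>UNIV. \<bar>\<mu> k\<bar>) + B" for x \<sigma>
      using abs_expectation_finite_le[of x \<mu>] abs_guarantee_le[of x q \<sigma>] by linarith
  qed
  also have "\<dots> = (SUP x. measure_pmf.expectation x \<mu> + game_val G x q)"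
    by (simp add: game_val_eq_SUP_guarantee Sup_add_eq bdd_above_guarantee)
  finally show ?thesis .
qed

lemma game_val_le_dual_val1: "measure_pmf.expectation p \<mu> + game_val G p q \<le> dual_val1 G \<mu> q"
  unfolding dual_val1_eq_SUP_game_val by (rule cSUP_upper[OF UNIV_I bdd_above_expectation_plus_game_val])

lemma bdd_below_dual_val1_shifted:
  "bdd_below (range (\<lambda>\<mu>. dual_val1 G \<mu> q - measure_pmf.expectation p \<mu>))"
  using game_val_le_dual_val1[of p] by (intro bdd_belowI2[where m = "game_val G p q"]) (simp add: algebra_simps)

text \<open>The converse Fenchel formula: a supergradient of the concave map \<open>x \<mapsto> game_val G x q\<close>
  at \<open>p\<close> is an almost optimal vector \<open>\<mu>\<close>.\<close>
lemma game_val_eq_INF_dual_val1: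
  "game_val G p q = (INF \<mu>. dual_val1 G \<mu> q - measure_pmf.expectation p \<mu>)"
proof (rule antisym)
  show "game_val G p q \<le> (INF \<mu>. dual_val1 G \<mu> q - measure_pmf.expectation p \<mu>)"
    using game_val_le_dual_val1[of p] by (intro cINF_greatest) (simp_all add: algebra_simps)
  show "(INF \<mu>. dual_val1 G \<mu> q - measure_pmf.expectation p \<mu>) \<le> game_val G p q"
  proof (rule field_le_epsilon)
    fix e :: real
    assume "0 < e"
    then have "0 < e / 2"
      by simp
    then obtain \<delta> where "0 < \<delta>"
      and near: "\<And>x. dist (pmf_vec x) (pmf_vec p) < \<delta> \<Longrightarrow> game_val G x q \<le> game_val G p q + e / 2"
      by (rule game_val_le_nearby[where p = p and q = q]) blast
    obtain \<mu> where \<mu>: "\<And>x. measure_pmf.expectation x \<mu> + game_val G x q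
        \<le> measure_pmf.expectation p \<mu> + game_val G p q + e"
      by (rule concave_pmf_fun_supergradient[where W = "\<lambda>x. game_val G x q" and e' = e,
            OF game_val_concave \<open>0 < \<delta>\<close> near]) (use \<open>0 < e\<close> in auto)
    have "(INF \<mu>. dual_val1 G \<mu> q - measure_pmf.expectation p \<mu>) \<le> dual_val1 G \<mu> q - measure_pmf.expectation p \<mu>"
      by (rule cINF_lower[OF bdd_below_dual_val1_shifted UNIV_I])
    also have "\<dots> \<le> game_val G p q + e"
    proof -
      have "dual_val1 G \<mu> q \<le> measure_pmf.expectation p \<mu> + game_val G p q + e"
        unfolding dual_val1_eq_SUP_game_val by (intro cSUP_least \<mu>) simp
      then show ?thesis
        by linarith
    qed
    finally show "(INF \<mu>. dual_val1 G \<mu> q - measure_pmf.expectation p \<mu>) \<le> game_val G p q + e" .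
  qed
qed

lemma expectation_plus_payoff_ge:
  "- (\<Sum>l\<in>UNIV. \<bar>\<nu> l\<bar>) - B \<le> measure_pmf.expectation y \<nu> + G p y \<sigma> \<tau>"
  using abs_expectation_finite_le[of y \<nu>] abs_payoff_le[of p y \<sigma> \<tau>] by linarith

lemma dual_val2_inner_eq_Min:
  "(INF (y, \<tau>). measure_pmf.expectation y \<nu> + G p y \<sigma> \<tau>) = (MIN l. \<nu> l + guarantee G p (return_pmf l) \<sigma>)"
  (is "?I = Min (range ?f)")
proof (rule antisym)
  have bdd: "bdd_below (range (\<lambda>(y, \<tau>). measure_pmf.expectation y \<nu> + G p y \<sigma> \<tau>))"
    by (rule bdd_belowI2) (auto intro: expectation_plus_payoff_ge)
  have "Min (range ?f) \<in> range ?f"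
    by (rule Min_in) simp_all
  then obtain l where l: "Min (range ?f) = ?f l"
    by blast
  have "?I - \<nu> l \<le> G p (return_pmf l) \<sigma> \<tau>" for \<tau>
    using cINF_lower[OF bdd, of "(return_pmf l, \<tau>)"] by simp
  then have "?I - \<nu> l \<le> guarantee G p (return_pmf l) \<sigma>"
    unfolding guarantee_def by (intro cINF_greatest) auto
  then show "?I \<le> Min (range ?f)"
    unfolding l by simp
  have "Min (range ?f) \<le> measure_pmf.expectation y \<nu> + G p y \<sigma> \<tau>" for y \<tau>
  proof -
    have "Min (range ?f) \<le> (\<Sum>l\<in>UNIV. pmf y l * ?f l)"
      by (rule Min_le_pmf_average)
    also have "\<dots> \<le> (\<Sum>l\<in>UNIV. pmf y l * (\<nu> l + G p (return_pmf l) \<sigma> \<tau>))"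
      by (intro sum_mono mult_left_mono add_left_mono guarantee_le) simp
    also have "\<dots> = measure_pmf.expectation y \<nu> + G p y \<sigma> \<tau>"
      by (simp add: expectation_finite expand_right[of p y] distrib_left sum.distrib)
    finally show ?thesis .
  qed
  then show "Min (range ?f) \<le> ?I"
    by (intro cINF_greatest) auto
qed

lemma bdd_below_expectation_plus_game_val:
  "bdd_below (range (\<lambda>y. measure_pmf.expectation y \<nu> + game_val G p y))"
proof (rule bdd_belowI2)
  show "- (\<Sum>l\<in>UNIV. \<bar>\<nu> l\<bar>) - B \<le> measure_pmf.expectation y \<nu> + game_val G p y" for y
    using abs_expectation_finite_le[of y \<nu>] abs_game_val_le[of p y] by linarith
qed

lemma dual_val2_eq_SUP_Min:
  "dual_val2 G p \<nu> = (SUP \<sigma>. MIN l. \<nu> l + guarantee G p (return_pmf l) \<sigma>)"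
  unfolding dual_val2_def dual_val2_inner_eq_Min ..

lemma bdd_above_Min_guarantee: "bdd_above (range (\<lambda>\<sigma>. MIN l. \<nu> l + guarantee G p (return_pmf l) \<sigma>))"
proof (rule bdd_aboveI2)
  fix \<sigma>
  have "(MIN l. \<nu> l + guarantee G p (return_pmf l) \<sigma>) \<le> \<nu> undefined + guarantee G p (return_pmf undefined) \<sigma>"
    by (rule Min_le) simp_all
  then show "(MIN l. \<nu> l + guarantee G p (return_pmf l) \<sigma>) \<le> \<nu> undefined + B"
    using abs_guarantee_le[of p "return_pmf undefined" \<sigma>] by linarith
qed

lemma dual_val2_le_game_val: "dual_val2 G p \<nu> \<le> measure_pmf.expectation y \<nu> + game_val G p y"
  unfolding dual_val2_eq_SUP_Min
proof (rule cSUP_least)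
  fix \<sigma>
  have "(MIN l. \<nu> l + guarantee G p (return_pmf l) \<sigma>) \<le> (\<Sum>l\<in>UNIV. pmf y l * (\<nu> l + guarantee G p (return_pmf l) \<sigma>))"
    by (rule Min_le_pmf_average)
  also have "\<dots> = measure_pmf.expectation y \<nu> + guarantee G p y \<sigma>"
    by (simp add: expectation_finite guarantee_expand_right[of p y] distrib_left sum.distrib)
  also have "\<dots> \<le> measure_pmf.expectation y \<nu> + game_val G p y"
    using guarantee_le_game_val by simp
  finally show "(MIN l. \<nu> l + guarantee G p (return_pmf l) \<sigma>) \<le> measure_pmf.expectation y \<nu> + game_val G p y" .
qed simp

lemma bdd_above_dual_val2_shifted:
  "bdd_above (range (\<lambda>\<nu>. dual_val2 G p \<nu> - measure_pmf.expectation q \<nu>))"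
  using dual_val2_le_game_val[of p _ q] by (intro bdd_aboveI2[where M = "game_val G p q"]) (simp add: algebra_simps)

lemma game_val_eq_SUP_dual_val2:
  "game_val G p q = (SUP \<nu>. dual_val2 G p \<nu> - measure_pmf.expectation q \<nu>)"
proof (rule antisym)
  show "(SUP \<nu>. dual_val2 G p \<nu> - measure_pmf.expectation q \<nu>) \<le> game_val G p q"
    using dual_val2_le_game_val[of p _ q] by (intro cSUP_least) (simp_all add: algebra_simps)
  show "game_val G p q \<le> (SUP \<nu>. dual_val2 G p \<nu> - measure_pmf.expectation q \<nu>)"
    unfolding game_val_eq_SUP_guarantee
  proof (rule cSUP_least)
    fix \<sigma>
    define \<nu> where "\<nu> l = - guarantee G p (return_pmf l) \<sigma>" for l
    have "(MIN l. \<nu> l + guarantee G p (return_pmf l) \<sigma>) \<le> dual_val2 G p \<nu>"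
      unfolding dual_val2_eq_SUP_Min by (rule cSUP_upper[OF UNIV_I bdd_above_Min_guarantee])
    then have "0 \<le> dual_val2 G p \<nu>"
      by (simp add: \<nu>_def)
    moreover have "- measure_pmf.expectation q \<nu> = guarantee G p q \<sigma>"
      by (simp add: \<nu>_def expectation_finite guarantee_expand_right[of p q] sum_negf)
    ultimately have "guarantee G p q \<sigma> \<le> dual_val2 G p \<nu> - measure_pmf.expectation q \<nu>"
      by linarith
    also have "\<dots> \<le> (SUP \<nu>. dual_val2 G p \<nu> - measure_pmf.expectation q \<nu>)"
      by (rule cSUP_upper[OF UNIV_I bdd_above_dual_val2_shifted])
    finally show "guarantee G p q \<sigma> \<le> (SUP \<nu>. dual_val2 G p \<nu> - measure_pmf.expectation q \<nu>)" .
  qed simp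
qed

text \<open>The minimax step: the payoff vectors \<open>l \<mapsto> \<nu> l + guarantee G p (return_pmf l) \<sigma>\<close> form a
  concave-like family because player 1 can mix strategies without changing his belief.\<close>
lemma dual_val2_eq_INF_game_val:
  "dual_val2 G p \<nu> = (INF y. measure_pmf.expectation y \<nu> + game_val G p y)"
proof (rule antisym)
  show "dual_val2 G p \<nu> \<le> (INF y. measure_pmf.expectation y \<nu> + game_val G p y)"
    by (intro cINF_greatest dual_val2_le_game_val) simp
  define c where "c = (INF y. measure_pmf.expectation y \<nu> + game_val G p y)"
  have c_le: "c \<le> measure_pmf.expectation y \<nu> + game_val G p y" for y
    unfolding c_def by (rule cINF_lower[OF bdd_below_expectation_plus_game_val UNIV_I])
  let ?f = "\<lambda>\<sigma> l. \<nu> l + guarantee G p (return_pmf l) \<sigma>"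
  show "c \<le> dual_val2 G p \<nu>"
  proof (rule field_le_epsilon)
    fix e :: real
    assume "0 < e"
    have "\<exists>\<sigma>. \<forall>l. c - e \<le> ?f \<sigma> l"
    proof (rule concave_like_minimax)
      fix \<sigma>1 \<sigma>2 and u :: real
      assume "0 \<le> u" "u \<le> 1"
      moreover have "pmf p k = u * pmf p k + (1 - u) * pmf p k" for k
        by (simp add: algebra_simps)
      ultimately obtain \<sigma> where
        \<sigma>: "\<And>q. u * guarantee G p q \<sigma>1 + (1 - u) * guarantee G p q \<sigma>2 \<le> guarantee G p q \<sigma>"
        using guarantee_mixture by blast
      have "u * ?f \<sigma>1 l + (1 - u) * ?f \<sigma>2 l \<le> ?f \<sigma> l" for l
        using \<sigma>[of "return_pmf l"] by (simp add: algebra_simps)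
      then show "\<exists>\<sigma>. \<forall>l. u * ?f \<sigma>1 l + (1 - u) * ?f \<sigma>2 l \<le> ?f \<sigma> l"
        by blast
    next
      fix y
      obtain \<sigma> where "game_val G p y - e < guarantee G p y \<sigma>"
        using near_optimal_strategy[OF \<open>0 < e\<close>] by blast
      moreover have "measure_pmf.expectation y \<nu> + guarantee G p y \<sigma> = (\<Sum>l\<in>UNIV. pmf y l * ?f \<sigma> l)"
        by (simp add: expectation_finite guarantee_expand_right[of p y] distrib_left sum.distrib)
      ultimately have "c - e < (\<Sum>l\<in>UNIV. pmf y l * ?f \<sigma> l)"
        using c_le[of y] by linarith
      then show "\<exists>\<sigma>. c - e < (\<Sum>l\<in>UNIV. pmf y l * ?f \<sigma> l)"
        by blast
    qed
    then obtain \<sigma> where "\<forall>l. c - e \<le> ?f \<sigma> l"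
      by blast
    then have "c - e \<le> (MIN l. ?f \<sigma> l)"
      by simp
    also have "\<dots> \<le> dual_val2 G p \<nu>"
      unfolding dual_val2_eq_SUP_Min by (rule cSUP_upper[OF UNIV_I bdd_above_Min_guarantee])
    finally show "c \<le> dual_val2 G p \<nu> + e"
      by simp
  qed
qed

end

locale incomplete_info_payoff_pair =
  G1: incomplete_info_payoff G1 B1 + G2: incomplete_info_payoff G2 B2
  for G1 G2 :: "'k::finite pmf \<Rightarrow> 'l::finite pmf \<Rightarrow> ('k,'a,'b) strat1 \<Rightarrow> ('l,'a,'b) strat2 \<Rightarrow> real"
    and B1 B2 :: real
begin

lemma abs_dual_val1_diff_le:
  assumes "\<And>x. \<bar>game_val G1 x q - game_val G2 x q\<bar> \<le> c"
  shows "\<bar>dual_val1 G1 \<mu> q - dual_val1 G2 \<mu> q\<bar> \<le> c"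
  unfolding G1.dual_val1_eq_SUP_game_val G2.dual_val1_eq_SUP_game_val
  by (rule abs_cSUP_diff_le[OF _ G1.bdd_above_expectation_plus_game_val G2.bdd_above_expectation_plus_game_val])
     (simp add: assms)

lemma abs_game_val_diff_le_dual_val1:
  assumes "\<And>\<mu>. \<bar>dual_val1 G1 \<mu> q - dual_val1 G2 \<mu> q\<bar> \<le> c"
  shows "\<bar>game_val G1 p q - game_val G2 p q\<bar> \<le> c"
  unfolding G1.game_val_eq_INF_dual_val1[of p q] G2.game_val_eq_INF_dual_val1[of p q]
  by (rule abs_cINF_diff_le[OF _ G1.bdd_below_dual_val1_shifted G2.bdd_below_dual_val1_shifted])
     (simp add: assms)

lemma abs_dual_val2_diff_le:
  assumes "\<And>y. \<bar>game_val G1 p y - game_val G2 p y\<bar> \<le> c"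
  shows "\<bar>dual_val2 G1 p \<nu> - dual_val2 G2 p \<nu>\<bar> \<le> c"
  unfolding G1.dual_val2_eq_INF_game_val G2.dual_val2_eq_INF_game_val
  by (rule abs_cINF_diff_le[OF _ G1.bdd_below_expectation_plus_game_val G2.bdd_below_expectation_plus_game_val])
     (simp add: assms)

lemma abs_game_val_diff_le_dual_val2:
  assumes "\<And>\<nu>. \<bar>dual_val2 G1 p \<nu> - dual_val2 G2 p \<nu>\<bar> \<le> c"
  shows "\<bar>game_val G1 p q - game_val G2 p q\<bar> \<le> c"
  unfolding G1.game_val_eq_SUP_dual_val2[of p q] G2.game_val_eq_SUP_dual_val2[of p q]
  by (rule abs_cSUP_diff_le[OF _ G1.bdd_above_dual_val2_shifted G2.bdd_above_dual_val2_shifted])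
     (simp add: assms)

theorem sup_dist_game_val_eq_sup_dist_dual_vals:
  "(SUP (p, q). \<bar>game_val G1 p q - game_val G2 p q\<bar>) = (SUP (\<mu>, q). \<bar>dual_val1 G1 \<mu> q - dual_val1 G2 \<mu> q\<bar>)
 \<and> (SUP (\<mu>, q). \<bar>dual_val1 G1 \<mu> q - dual_val1 G2 \<mu> q\<bar>) = (SUP (p, \<nu>). \<bar>dual_val2 G1 p \<nu> - dual_val2 G2 p \<nu>\<bar>)"
proof -
  have "\<bar>game_val G1 p q - game_val G2 p q\<bar> \<le> B1 + B2" for p q
    using G1.abs_game_val_le[of p q] G2.abs_game_val_le[of p q] by linarith
  then have bdd: "bdd_above (range (\<lambda>(p, q). \<bar>game_val G1 p q - game_val G2 p q\<bar>))"
    by (intro bdd_aboveI2[where M = "B1 + B2"]) auto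
  have "(SUP (p, q). \<bar>game_val G1 p q - game_val G2 p q\<bar>) = (SUP (\<mu>, q). \<bar>dual_val1 G1 \<mu> q - dual_val1 G2 \<mu> q\<bar>)"
    by (rule cSUP_eq_cSUP_same_upper_bounds[OF bdd])
       (auto intro: abs_dual_val1_diff_le, auto intro: abs_game_val_diff_le_dual_val1)
  moreover have "(SUP (p, q). \<bar>game_val G1 p q - game_val G2 p q\<bar>) = (SUP (p, \<nu>). \<bar>dual_val2 G1 p \<nu> - dual_val2 G2 p \<nu>\<bar>)"
    by (rule cSUP_eq_cSUP_same_upper_bounds[OF bdd])
       (auto intro: abs_dual_val2_diff_le, auto intro: abs_game_val_diff_le_dual_val2)
  ultimately show ?thesis
    by simp
qed

end

theorem lemma4:
  fixes M :: "'k::finite \<Rightarrow> 'l::finite \<Rightarrow> 'a::finite \<Rightarrow> 'b::finite \<Rightarrow> real"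
    and lam :: real and T :: nat
  assumes "0 < lam" and "lam < 1" and "1 \<le> T"
  shows "(SUP (p, q). \<bar>game_val (disc_pay M lam) p q - game_val (trunc_pay M lam T) p q\<bar>)
           = (SUP (\<mu>, q). \<bar>dual_val1 (disc_pay M lam) \<mu> q - dual_val1 (trunc_pay M lam T) \<mu> q\<bar>)
       \<and> (SUP (\<mu>, q). \<bar>dual_val1 (disc_pay M lam) \<mu> q - dual_val1 (trunc_pay M lam T) \<mu> q\<bar>)
           = (SUP (p, \<nu>). \<bar>dual_val2 (disc_pay M lam) p \<nu> - dual_val2 (trunc_pay M lam T) p \<nu>\<bar>)"
proof -
  define C where "C = Max (range (\<lambda>(k, l, a, b). \<bar>M k l a b\<bar>))"
  have M_bounded: "\<bar>M k l a b\<bar> \<le> C" for k l a b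
    unfolding C_def by (rule Max_ge) (auto intro!: image_eqI[where x = "(k, l, a, b)"])
  define w where "w n = lam * (1 - lam) ^ n" for n
  define w_T where "w_T n = (if n < T then w n else 0)" for n
  have w: "0 \<le> w n" "summable w" for n
    unfolding w_def using assms by (simp, intro summable_mult summable_geometric) simp
  have "disc_pay M lam = (\<lambda>p q \<sigma> \<tau>. \<Sum>n. w n * stage_pay M p q \<sigma> \<tau> n)"
    by (simp add: fun_eq_iff disc_pay_def w_def)
  then have disc: "incomplete_info_payoff (disc_pay M lam) (C * (\<Sum>n. w n))"
    using incomplete_info_payoff_weighted_stages[where M = M, OF M_bounded w] by simp
  have "(\<Sum>n. w_T n * s n) = (\<Sum>n<T. w n * s n)" for s :: "nat \<Rightarrow> real"
    by (subst suminf_finite[of "{..<T}"]) (auto simp: w_T_def)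
  then have "trunc_pay M lam T = (\<lambda>p q \<sigma> \<tau>. \<Sum>n. w_T n * stage_pay M p q \<sigma> \<tau> n)"
    by (simp add: fun_eq_iff trunc_pay_def w_def)
  moreover have "0 \<le> w_T n" "summable w_T" for n
    using w unfolding w_T_def by (simp_all add: summable_If_finite)
  ultimately have trunc: "incomplete_info_payoff (trunc_pay M lam T) (C * (\<Sum>n. w_T n))"
    using incomplete_info_payoff_weighted_stages[where M = M, OF M_bounded] by simp
  interpret incomplete_info_payoff_pair "disc_pay M lam" "trunc_pay M lam T"
    "C * (\<Sum>n. w n)" "C * (\<Sum>n. w_T n)"
    using disc trunc by (rule incomplete_info_payoff_pair.intro)
  show ?thesis
    by (rule sup_dist_game_val_eq_sup_dist_dual_vals)
qed

end
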